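(* Let $\mathcal{C}$ be a clutter whose vertex set is a subset of $\{x_1,\dots,x_n\}$, $S=\mathbb{K}[x_1,\dots,x_n]$ with $\mathbb{K}$ a field. If $\{e_1,\dots,e_s\}$ is a 2-collage in $\mathcal{C}$, then \[ \operatorname{sreg}(S/I(\mathcal{C}))\le\sum_{i=1}^s(|e_i|-1). \]
   Context: A clutter $\mathcal{C}$ consists of a finite vertex set and a collection $E(\mathcal{C})$ of subsets (edges), no edge containing another; vertices are identified with variables and $I(\mathcal{C})=(\prod_{x\in e}x : e\in E(\mathcal{C}))$ is the edge ideal. A 2-collage for $\mathcal{C}$ is a subset $C\subseteq E(\mathcal{C})$ such that for each $e\in E(\mathcal{C})$ there is a vertex $v$ with $e\setminus\{v\}$ contained in some edge of $C$. Stanley regularity: for a squarefree monomial ideal $I\subset S$, a squarefree Stanley decomposition of $S/I$ is a decomposition $S/I=\bigoplus_{i=1}^r u_i\mathbb{K}[Z_i]$ as $\mathbb{K}$-vector spaces, where $Z_i\subseteq\{x_1,\dots,x_n\}$, $u_i$ are (images of) squarefree monomials with $\operatorname{supp}(u_i)\subseteq Z_i$, and each $u_i\mathbb{K}[Z_i]$ is free over $\mathbb{K}[Z_i]$. Its Stanley regularity is $\max_i\deg(u_i)$, and $\operatorname{sreg}(S/I)$ is the minimum over all such decompositions. *)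

theory Defs
  imports Main "HOL-Library.Poly_Mapping"
begin

text \<open>The ring S = K[x_0,...,x_{n-1}] consists of those polynomials involving only
  variables with index < n.\<close>

type_synonym 'k mpoly = "(nat \<Rightarrow>\<^sub>0 nat) \<Rightarrow>\<^sub>0 'k"

definition poly_vars :: "'k::zero mpoly \<Rightarrow> nat set" where
  "poly_vars p = (\<Union>m\<in>Poly_Mapping.keys p. Poly_Mapping.keys (m::nat \<Rightarrow>\<^sub>0 nat))"

definition in_polyring :: "nat set \<Rightarrow> 'k::zero mpoly \<Rightarrow> bool" where
  "in_polyring Z p \<longleftrightarrow> poly_vars p \<subseteq> Z"

definition sqmono :: "nat set \<Rightarrow> 'k::{zero,one} mpoly" where
  "sqmono U = Poly_Mapping.single (\<Sum>i\<in>U. Poly_Mapping.single i (1::nat)) 1"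

definition clutter :: "nat set \<Rightarrow> nat set set \<Rightarrow> bool" where
  "clutter V E \<longleftrightarrow> finite V \<and> (\<forall>e\<in>E. e \<subseteq> V) \<and>
     (\<forall>e\<in>E. \<forall>f\<in>E. e \<subseteq> f \<longrightarrow> e = f)"

definition edge_ideal :: "nat \<Rightarrow> nat set set \<Rightarrow> 'k::comm_ring_1 mpoly set" where
  "edge_ideal n E = {p. \<exists>g. (\<forall>e\<in>E. in_polyring {..<n} (g e)) \<and>
                          p = (\<Sum>e\<in>E. g e * sqmono e)}"

definition two_collage :: "nat set set \<Rightarrow> nat set set \<Rightarrow> bool" where
  "two_collage E C \<longleftrightarrow> C \<subseteq> E \<and>
     (\<forall>e\<in>E. \<exists>v. \<exists>f\<in>C. e - {v} \<subseteq> f)"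

text \<open>A squarefree Stanley decomposition of S/I, S = K[x_0..x_{n-1}]: a list of pairs
  (U_i, Z_i) of sets of variables with U_i \<subseteq> Z_i (u_i = prod_{x in U_i} x), such that
  S/I = \<Oplus>_i u_i K[Z_i] as K-vector spaces with each summand free over K[Z_i].
  Spelled out in S: every p in S is congruent mod I to some sum \<Sum> u_i f_i with
  f_i \<in> K[Z_i] (the summands span), and such a sum lies in I only if all f_i = 0
  (directness of the sum together with freeness of each u_i K[Z_i]).\<close>
definition stanley_decomp :: "'k itself \<Rightarrow> nat \<Rightarrow> 'k::field mpoly set \<Rightarrow> (nat set \<times> nat set) list \<Rightarrow> bool" where
  "stanley_decomp _ n I D \<longleftrightarrow>
     (\<forall>(U,Z)\<in>set D. U \<subseteq> Z \<and> Z \<subseteq> {..<n}) \<and>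
     (\<forall>p::'k mpoly. in_polyring {..<n} p \<longrightarrow>
        (\<exists>f. (\<forall>i<length D. in_polyring (snd (D!i)) (f i)) \<and>
             p - (\<Sum>i<length D. sqmono (fst (D!i)) * f i) \<in> I)) \<and>
     (\<forall>f::nat \<Rightarrow> 'k mpoly. (\<forall>i<length D. in_polyring (snd (D!i)) (f i)) \<and>
             (\<Sum>i<length D. sqmono (fst (D!i)) * f i) \<in> I \<longrightarrow>
             (\<forall>i<length D. f i = 0))"

definition stanley_reg :: "(nat set \<times> nat set) list \<Rightarrow> nat" where
  "stanley_reg D = Max (insert 0 (set (map (card \<circ> fst) D)))"

definition sreg :: "'k itself \<Rightarrow> nat \<Rightarrow> 'k::field mpoly set \<Rightarrow> nat" where
  "sreg K n I = (LEAST d. \<exists>D. stanley_decomp K n I D \<and> stanley_reg D = d)"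

end

theory Submission
  imports Defs
begin

text \<open>Modulo \<open>I(\<C>)\<close> a monomial survives exactly when its support is a face of the clutter,
  i.e. contains no edge. Hence every partition of the faces into intervals \<open>[U, Z]\<close> whose tops
  \<open>Z\<close> are faces yields a Stanley decomposition \<open>\<Oplus> x\<^sub>U \<bbbK>[Z]\<close> of regularity \<open>max |U|\<close>.
  For a 2-collage put \<open>A = \<Union>C\<close>; every edge has at most one vertex outside \<open>A\<close>.
  The intervals \<open>[U, U \<union> {x \<notin> A. U \<union> {x} is a face}]\<close> for faces \<open>U \<subseteq> A\<close> partition the faces
  (\<open>F\<close> lies in the interval of \<open>F \<inter> A\<close>), and their tops are faces, since an edge inside a top
  would lie in \<open>U \<union> {x}\<close> for its unique vertex \<open>x\<close> outside \<open>A\<close>.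
  A face \<open>U \<subseteq> A\<close> misses a vertex of every \<open>e \<in> C\<close>, so \<open>|U| \<le> \<Sum>\<^sub>e\<^sub>\<in>\<^sub>C (|e| - 1)\<close>.\<close>

definition sqexp :: "nat set \<Rightarrow> (nat \<Rightarrow>\<^sub>0 nat)" where
  "sqexp U = (\<Sum>i\<in>U. Poly_Mapping.single i 1)"

lemma sqmono_eq_single: "sqmono U = Poly_Mapping.single (sqexp U) 1"
  by (simp add: sqmono_def sqexp_def)

lemma lookup_sqexp: "finite U \<Longrightarrow> Poly_Mapping.lookup (sqexp U) i = (if i \<in> U then 1 else 0)"
  unfolding sqexp_def by (simp add: lookup_sum lookup_single when_def)

lemma keys_add_nat:
  "Poly_Mapping.keys (s + t :: nat \<Rightarrow>\<^sub>0 nat) = Poly_Mapping.keys s \<union> Poly_Mapping.keys t"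
  by (auto simp: in_keys_iff lookup_add)

lemma keys_sqexp_add:
  "finite U \<Longrightarrow> Poly_Mapping.keys (sqexp U + m) = U \<union> Poly_Mapping.keys m"
  by (auto simp: keys_add_nat in_keys_iff lookup_sqexp split: if_splits)

lemma keys_diff_subset: "Poly_Mapping.keys (t - s :: nat \<Rightarrow>\<^sub>0 nat) \<subseteq> Poly_Mapping.keys t"
  by (auto simp: in_keys_iff lookup_minus)

lemma sqexp_add_diff:
  "finite U \<Longrightarrow> U \<subseteq> Poly_Mapping.keys t \<Longrightarrow> sqexp U + (t - sqexp U) = t"
  by (rule poly_mapping_eqI) (auto simp: lookup_add lookup_minus lookup_sqexp in_keys_iff)

lemma lookup_single_mult_add:
  "Poly_Mapping.lookup (Poly_Mapping.single s c * g) (s + m) = c * Poly_Mapping.lookup (g :: 'k::comm_semiring_1 mpoly) m"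
proof -
  have "(\<lambda>q. Poly_Mapping.lookup g q when s + m = s + q) = (\<lambda>q. Poly_Mapping.lookup g q when q = m)"
    by (auto simp: when_def)
  then show ?thesis
    by (simp add: lookup_mult lookup_single when_mult)
qed

lemma lookup_sqmono_mult:
  "Poly_Mapping.lookup (sqmono U * g) (sqexp U + m) = Poly_Mapping.lookup (g :: 'k::comm_semiring_1 mpoly) m"
  by (simp add: sqmono_eq_single lookup_single_mult_add)

lemma keys_sqmono_mult:
  assumes "finite U" "t \<in> Poly_Mapping.keys (sqmono U * (g :: 'k::comm_semiring_1 mpoly))"
  shows "U \<subseteq> Poly_Mapping.keys t" "Poly_Mapping.keys t \<subseteq> U \<union> poly_vars g"
proof -
  obtain m where "m \<in> Poly_Mapping.keys g" "t = sqexp U + m"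
    using keys_mult[of "sqmono U" g] assms(2) by (auto simp: sqmono_eq_single split: if_splits)
  then show "U \<subseteq> Poly_Mapping.keys t" "Poly_Mapping.keys t \<subseteq> U \<union> poly_vars g"
    using assms(1) by (auto simp: keys_sqexp_add poly_vars_def)
qed

lemma poly_vars_add: "poly_vars (p + q) \<subseteq> poly_vars p \<union> poly_vars q"
  unfolding poly_vars_def using keys_add[of p q] by auto

lemma poly_vars_single: "poly_vars (Poly_Mapping.single t c) \<subseteq> Poly_Mapping.keys t"
  unfolding poly_vars_def by auto

lemma keys_subset_poly_vars: "t \<in> Poly_Mapping.keys p \<Longrightarrow> Poly_Mapping.keys t \<subseteq> poly_vars p"
  unfolding poly_vars_def by blast

lemma poly_mapping_sum_single:
  "p = (\<Sum>t\<in>Poly_Mapping.keys p. Poly_Mapping.single t (Poly_Mapping.lookup p t))"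
  by (rule poly_mapping_eqI) (simp add: lookup_sum lookup_single when_def in_keys_iff)

lemma edge_ideal_zero: "0 \<in> edge_ideal n E"
  unfolding edge_ideal_def in_polyring_def poly_vars_def by (auto intro!: exI[of _ "\<lambda>_. 0"])

lemma edge_ideal_add:
  assumes "p \<in> edge_ideal n E" "q \<in> edge_ideal n E"
  shows "p + q \<in> edge_ideal n E"
proof -
  obtain g h where g: "\<forall>e\<in>E. in_polyring {..<n} (g e)" "p = (\<Sum>e\<in>E. g e * sqmono e)"
    and h: "\<forall>e\<in>E. in_polyring {..<n} (h e)" "q = (\<Sum>e\<in>E. h e * sqmono e)"
    using assms unfolding edge_ideal_def by auto
  have "\<forall>e\<in>E. in_polyring {..<n} (g e + h e)"
    using g(1) h(1) poly_vars_add unfolding in_polyring_def by blast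
  moreover have "p + q = (\<Sum>e\<in>E. (g e + h e) * sqmono e)"
    by (simp add: g(2) h(2) distrib_right sum.distrib)
  ultimately show ?thesis
    unfolding edge_ideal_def by (intro CollectI exI[of _ "\<lambda>e. g e + h e"]) simp
qed

lemma edge_ideal_keys_contain_edge:
  assumes "p \<in> edge_ideal n E" "\<forall>e\<in>E. finite e" "t \<in> Poly_Mapping.keys p"
  shows "\<exists>e\<in>E. e \<subseteq> Poly_Mapping.keys t"
proof -
  obtain g where "p = (\<Sum>e\<in>E. g e * sqmono e)"
    using assms(1) unfolding edge_ideal_def by blast
  then obtain e where "e \<in> E" "t \<in> Poly_Mapping.keys (g e * sqmono e)"
    using keys_sum[of "\<lambda>e. g e * sqmono e" E] assms(3) by blast
  then show ?thesis
    using keys_sqmono_mult(1)[of e t "g e"] assms(2) by (metis mult.commute)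
qed

lemma single_in_edge_ideal:
  assumes "finite E" "e \<in> E" "finite e" "e \<subseteq> Poly_Mapping.keys t" "Poly_Mapping.keys t \<subseteq> {..<n}"
  shows "Poly_Mapping.single t c \<in> edge_ideal n E"
proof -
  define g where "g e' = (if e' = e then Poly_Mapping.single (t - sqexp e) c else 0)" for e'
  have "\<forall>e'\<in>E. in_polyring {..<n} (g e')"
    using assms(5) keys_diff_subset poly_vars_single
    by (fastforce simp: g_def in_polyring_def poly_vars_def)
  moreover have "(\<Sum>e'\<in>E. g e' * sqmono e') = Poly_Mapping.single t c"
  proof -
    have "(\<Sum>e'\<in>E. g e' * sqmono e') = g e * sqmono e"
      using assms(1,2) by (simp add: sum.remove g_def)
    also have "\<dots> = Poly_Mapping.single (sqexp e + (t - sqexp e)) c"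
      by (simp add: g_def sqmono_eq_single mult_single add.commute)
    finally show ?thesis
      by (simp only: sqexp_add_diff[OF assms(3,4)])
  qed
  ultimately show ?thesis
    unfolding edge_ideal_def by (intro CollectI exI[of _ g]) simp
qed

definition face :: "nat \<Rightarrow> nat set set \<Rightarrow> nat set \<Rightarrow> bool" where
  "face n E F \<longleftrightarrow> F \<subseteq> {..<n} \<and> (\<forall>e\<in>E. \<not> e \<subseteq> F)"

lemma face_subset: "face n E G \<Longrightarrow> F \<subseteq> G \<Longrightarrow> face n E F"
  unfolding face_def by blast

definition in_interval :: "nat set \<times> nat set \<Rightarrow> nat set \<Rightarrow> bool" where
  "in_interval B F \<longleftrightarrow> fst B \<subseteq> F \<and> F \<subseteq> snd B"

definition interval_partition :: "nat \<Rightarrow> nat set set \<Rightarrow> (nat set \<times> nat set) list \<Rightarrow> bool" where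
  "interval_partition n E D \<longleftrightarrow> distinct D \<and>
     (\<forall>(U, Z)\<in>set D. U \<subseteq> Z \<and> face n E Z) \<and>
     (\<forall>F. face n E F \<longrightarrow> (\<exists>!B\<in>set D. in_interval B F))"

lemma interval_partition_block:
  assumes "interval_partition n E D" "B \<in> set D"
  shows "fst B \<subseteq> snd B" "face n E (snd B)"
  using assms unfolding interval_partition_def by (auto simp: case_prod_beta)

lemma interval_partition_nth:
  assumes "interval_partition n E D" "i < length D"
  shows "fst (D!i) \<subseteq> snd (D!i)" "face n E (snd (D!i))"
  using interval_partition_block[OF assms(1) nth_mem[OF assms(2)]] by auto

lemma interval_partition_cover:
  assumes "interval_partition n E D" "face n E F"
  obtains i where "i < length D" "in_interval (D!i) F"
  using assms unfolding interval_partition_def by (metis in_set_conv_nth)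

lemma interval_partition_nth_unique:
  assumes "interval_partition n E D" "i < length D" "j < length D"
    and "in_interval (D!i) F" "in_interval (D!j) F"
  shows "i = j"
proof -
  have "face n E F"
    using interval_partition_nth(2)[OF assms(1,2)] assms(4) face_subset
    unfolding in_interval_def by blast
  then have "D!i = D!j"
    using assms nth_mem unfolding interval_partition_def by blast
  then show "i = j"
    using assms(1-3) by (simp add: interval_partition_def nth_eq_iff_index_eq)
qed

definition spanned_mod :: "'k::comm_ring_1 mpoly set \<Rightarrow> (nat set \<times> nat set) list \<Rightarrow> 'k mpoly \<Rightarrow> bool" where
  "spanned_mod I D p \<longleftrightarrow> (\<exists>f. (\<forall>i<length D. in_polyring (snd (D!i)) (f i)) \<and>
                             p - (\<Sum>i<length D. sqmono (fst (D!i)) * f i) \<in> I)"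

lemma spanned_mod_zero: "spanned_mod (edge_ideal n E) D 0"
  unfolding spanned_mod_def in_polyring_def poly_vars_def
  by (rule exI[of _ "\<lambda>_. 0"]) (simp add: edge_ideal_zero)

lemma spanned_mod_add:
  assumes "spanned_mod (edge_ideal n E) D p" "spanned_mod (edge_ideal n E) D q"
  shows "spanned_mod (edge_ideal n E) D (p + q)"
proof -
  obtain f g where f: "\<forall>i<length D. in_polyring (snd (D!i)) (f i)"
      "p - (\<Sum>i<length D. sqmono (fst (D!i)) * f i) \<in> edge_ideal n E"
    and g: "\<forall>i<length D. in_polyring (snd (D!i)) (g i)"
      "q - (\<Sum>i<length D. sqmono (fst (D!i)) * g i) \<in> edge_ideal n E"
    using assms unfolding spanned_mod_def by blast
  have sum_in_polyring: "\<forall>i<length D. in_polyring (snd (D!i)) (f i + g i)"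
    using f(1) g(1) poly_vars_add unfolding in_polyring_def by blast
  have "p + q - (\<Sum>i<length D. sqmono (fst (D!i)) * (f i + g i))
      = (p - (\<Sum>i<length D. sqmono (fst (D!i)) * f i)) + (q - (\<Sum>i<length D. sqmono (fst (D!i)) * g i))"
    by (simp add: distrib_left sum.distrib)
  with edge_ideal_add[OF f(2) g(2)]
  have "p + q - (\<Sum>i<length D. sqmono (fst (D!i)) * (f i + g i)) \<in> edge_ideal n E"
    by (simp only:)
  with sum_in_polyring show ?thesis
    unfolding spanned_mod_def by (intro exI[of _ "\<lambda>i. f i + g i"] conjI)
qed

lemma spanned_mod_sum:
  "(\<And>x. x \<in> A \<Longrightarrow> spanned_mod (edge_ideal n E) D (f x)) \<Longrightarrow> spanned_mod (edge_ideal n E) D (sum f A)"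
  by (induction A rule: infinite_finite_induct) (simp_all add: spanned_mod_zero spanned_mod_add)

lemma sqmono_sum_nth_eq_single:
  fixes c :: "'k::comm_ring_1"
  assumes "i < length D" "finite (fst (D!i))" "fst (D!i) \<subseteq> Poly_Mapping.keys t"
  shows "(\<Sum>j<length D. sqmono (fst (D!j)) *
            (if j = i then Poly_Mapping.single (t - sqexp (fst (D!i))) c else 0))
         = Poly_Mapping.single t c"
proof -
  have "(\<Sum>j<length D. sqmono (fst (D!j)) *
            (if j = i then Poly_Mapping.single (t - sqexp (fst (D!i))) c else 0))
      = Poly_Mapping.single (sqexp (fst (D!i)) + (t - sqexp (fst (D!i)))) c"
    using assms(1) by (simp add: sum.remove sqmono_eq_single mult_single)
  then show ?thesis
    by (simp only: sqexp_add_diff[OF assms(2,3)])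
qed

lemma spanned_mod_single:
  assumes "interval_partition n E D" "finite E" "\<forall>e\<in>E. finite e"
    and "Poly_Mapping.keys t \<subseteq> {..<n}"
  shows "spanned_mod (edge_ideal n E) D (Poly_Mapping.single t c)"
proof (cases "face n E (Poly_Mapping.keys t)")
  case True
  then obtain i where i: "i < length D" "in_interval (D!i) (Poly_Mapping.keys t)"
    using interval_partition_cover[OF assms(1)] by blast
  have "finite (fst (D!i))"
    using interval_partition_nth[OF assms(1) i(1)] unfolding face_def
    by (meson finite_lessThan finite_subset)
  then have "(\<Sum>j<length D. sqmono (fst (D!j)) *
              (if j = i then Poly_Mapping.single (t - sqexp (fst (D!i))) c else 0))
           = Poly_Mapping.single t c"
    using sqmono_sum_nth_eq_single i unfolding in_interval_def by blast
  moreover have "in_polyring (snd (D!i)) (Poly_Mapping.single (t - sqexp (fst (D!i))) c)"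
    using i(2) poly_vars_single keys_diff_subset unfolding in_polyring_def in_interval_def by blast
  ultimately show ?thesis
    unfolding spanned_mod_def in_polyring_def poly_vars_def
    by (intro exI[of _ "\<lambda>j. if j = i then Poly_Mapping.single (t - sqexp (fst (D!i))) c else 0"])
       (auto simp: edge_ideal_zero)
next
  case False
  then obtain e where "e \<in> E" "e \<subseteq> Poly_Mapping.keys t"
    using assms(4) unfolding face_def by blast
  then have "Poly_Mapping.single t c \<in> edge_ideal n E"
    using single_in_edge_ideal assms(2-4) by blast
  then show ?thesis
    unfolding spanned_mod_def in_polyring_def poly_vars_def
    by (intro exI[of _ "\<lambda>_. 0"]) simp
qed

lemma interval_partition_spans:
  assumes "interval_partition n E D" "finite E" "\<forall>e\<in>E. finite e" "in_polyring {..<n} p"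
  shows "spanned_mod (edge_ideal n E) D p"
proof -
  have "spanned_mod (edge_ideal n E) D (Poly_Mapping.single t (Poly_Mapping.lookup p t))"
    if "t \<in> Poly_Mapping.keys p" for t
    using spanned_mod_single[OF assms(1-3)] keys_subset_poly_vars[OF that] assms(4)
    unfolding in_polyring_def by blast
  then show ?thesis
    by (subst poly_mapping_sum_single) (rule spanned_mod_sum)
qed

lemma interval_partition_independent:
  fixes f :: "nat \<Rightarrow> 'k::comm_ring_1 mpoly"
  assumes D: "interval_partition n E D" and fin: "\<forall>e\<in>E. finite e"
    and f: "\<forall>i<length D. in_polyring (snd (D!i)) (f i)"
    and in_ideal: "(\<Sum>i<length D. sqmono (fst (D!i)) * f i) \<in> edge_ideal n E"
  shows "\<forall>i<length D. f i = 0"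
proof (rule ccontr)
  assume "\<not> (\<forall>i<length D. f i = 0)"
  then obtain j m where j: "j < length D" and m: "m \<in> Poly_Mapping.keys (f j)"
    by (metis keys_eq_empty ex_in_conv)
  have finite_fst: "finite (fst (D!i))" if "i < length D" for i
    using interval_partition_nth[OF D that] unfolding face_def
    by (meson finite_lessThan finite_subset)
  have summand_keys: "in_interval (D!i) (Poly_Mapping.keys t)"
    if "i < length D" "t \<in> Poly_Mapping.keys (sqmono (fst (D!i)) * f i)" for i t
    using keys_sqmono_mult[OF finite_fst[OF that(1)] that(2)] f interval_partition_nth(1)[OF D]
    unfolding in_interval_def in_polyring_def by (meson Un_least order_trans that(1))
  define t where "t = sqexp (fst (D!j)) + m"
  have coeff_t: "Poly_Mapping.lookup (sqmono (fst (D!j)) * f j) t = Poly_Mapping.lookup (f j) m"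
    unfolding t_def by (rule lookup_sqmono_mult)
  then have t_j: "in_interval (D!j) (Poly_Mapping.keys t)"
    using summand_keys[OF j] m by (simp add: in_keys_iff)
  \<comment> \<open>only the \<open>j\<close>-th summand contributes to the coefficient of \<open>t\<close>\<close>
  have "Poly_Mapping.lookup (sqmono (fst (D!i)) * f i) t = 0" if "i < length D" "i \<noteq> j" for i
    using summand_keys[OF that(1)] interval_partition_nth_unique[OF D that(1) j _ t_j] that(2)
    by (meson in_keys_iff)
  then have "(\<Sum>i<length D. Poly_Mapping.lookup (sqmono (fst (D!i)) * f i) t) = Poly_Mapping.lookup (f j) m"
    using j coeff_t by (simp add: sum.remove)
  then have "Poly_Mapping.lookup (\<Sum>i<length D. sqmono (fst (D!i)) * f i) t = Poly_Mapping.lookup (f j) m"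
    by (simp add: lookup_sum)
  then have "t \<in> Poly_Mapping.keys (\<Sum>i<length D. sqmono (fst (D!i)) * f i)"
    using m by (simp add: in_keys_iff)
  then obtain e where "e \<in> E" "e \<subseteq> Poly_Mapping.keys t"
    using edge_ideal_keys_contain_edge[OF in_ideal fin] by blast
  moreover have "face n E (Poly_Mapping.keys t)"
    using t_j interval_partition_nth(2)[OF D j] face_subset unfolding in_interval_def by blast
  ultimately show False
    unfolding face_def by blast
qed

lemma stanley_decomp_of_interval_partition:
  assumes "interval_partition n E D" "finite E" "\<forall>e\<in>E. finite e"
  shows "stanley_decomp TYPE('k::field) n (edge_ideal n E) D"
proof -
  have "U \<subseteq> Z \<and> Z \<subseteq> {..<n}" if "(U, Z) \<in> set D" for U Z
    using assms(1) that unfolding interval_partition_def face_def by fast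
  then show ?thesis
    using interval_partition_spans[OF assms] interval_partition_independent[OF assms(1,3)]
    unfolding stanley_decomp_def spanned_mod_def by blast
qed

definition interval_top :: "nat \<Rightarrow> nat set set \<Rightarrow> nat set \<Rightarrow> nat set \<Rightarrow> nat set" where
  "interval_top n E A U = U \<union> {x. x \<notin> A \<and> face n E (insert x U)}"

lemma interval_top_inter: "U \<subseteq> A \<Longrightarrow> interval_top n E A U \<inter> A = U"
  unfolding interval_top_def by blast

lemma face_subset_interval_top:
  assumes "face n E F"
  shows "F \<subseteq> interval_top n E A (F \<inter> A)"
proof
  fix x assume "x \<in> F"
  then have "face n E (insert x (F \<inter> A))"
    by (intro face_subset[OF assms]) blast
  with \<open>x \<in> F\<close> show "x \<in> interval_top n E A (F \<inter> A)"
    unfolding interval_top_def by blast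
qed

lemma face_interval_top:
  assumes almost_in_A: "\<forall>e\<in>E. \<exists>v. e - {v} \<subseteq> A"
    and U: "U \<subseteq> A" "face n E U"
  shows "face n E (interval_top n E A U)"
  unfolding face_def
proof (intro conjI ballI notI)
  show "interval_top n E A U \<subseteq> {..<n}"
    using U(2) unfolding interval_top_def face_def by auto
next
  fix e assume e: "e \<in> E" "e \<subseteq> interval_top n E A U"
  then obtain v where "e - {v} \<subseteq> A"
    using almost_in_A by blast
  then have e_v: "e \<subseteq> insert v U"
    using e(2) interval_top_inter[OF U(1)] by blast
  moreover have "\<not> e \<subseteq> U"
    using U(2) e(1) unfolding face_def by blast
  ultimately have "v \<in> e - U"
    by blast
  then have "face n E (insert v U)"
    using e(2) unfolding interval_top_def by blast
  with e_v e(1) show False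
    unfolding face_def by blast
qed

lemma interval_partition_exists:
  assumes "finite A" "\<forall>e\<in>E. \<exists>v. e - {v} \<subseteq> A"
  obtains D where "interval_partition n E D" "\<forall>B\<in>set D. fst B \<subseteq> A"
proof -
  have "finite {U. U \<subseteq> A \<and> face n E U}"
    using assms(1) by simp
  then obtain Us where Us: "set Us = {U. U \<subseteq> A \<and> face n E U}" "distinct Us"
    by (metis finite_distinct_list)
  define D where "D = map (\<lambda>U. (U, interval_top n E A U)) Us"
  have "interval_partition n E D"
    unfolding interval_partition_def
  proof (intro conjI allI impI)
    show "distinct D"
      using Us(2) unfolding D_def by (simp add: distinct_map inj_on_def)
    show "\<forall>(U, Z)\<in>set D. U \<subseteq> Z \<and> face n E Z"
      using Us(1) face_interval_top[OF assms(2)] unfolding D_def interval_top_def by auto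
  next
    fix F assume F: "face n E F"
    show "\<exists>!B\<in>set D. in_interval B F"
    proof (rule ex1I)
      show "(F \<inter> A, interval_top n E A (F \<inter> A)) \<in> set D \<and>
            in_interval (F \<inter> A, interval_top n E A (F \<inter> A)) F"
        using Us(1) face_subset[OF F] face_subset_interval_top[OF F]
        unfolding D_def in_interval_def by auto
    next
      fix B assume B: "B \<in> set D \<and> in_interval B F"
      then obtain U where U: "U \<subseteq> A" "B = (U, interval_top n E A U)"
        using Us(1) unfolding D_def by auto
      then have "U = F \<inter> A"
        using B interval_top_inter[OF U(1), of n E] unfolding in_interval_def by auto
      then show "B = (F \<inter> A, interval_top n E A (F \<inter> A))"
        using U(2) by simp
    qed
  qed
  moreover have "\<forall>B\<in>set D. fst B \<subseteq> A"
    using Us(1) unfolding D_def by auto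
  ultimately show ?thesis
    using that by blast
qed

lemma card_le_sum_card_minus_one:
  assumes "finite C" "\<forall>e\<in>C. finite e \<and> \<not> e \<subseteq> U" "U \<subseteq> \<Union>C"
  shows "card U \<le> (\<Sum>e\<in>C. card e - 1)"
proof -
  have "U = (\<Union>e\<in>C. U \<inter> e)"
    using assms(3) by blast
  then have "card U \<le> (\<Sum>e\<in>C. card (U \<inter> e))"
    using card_UN_le[OF assms(1), of "\<lambda>e. U \<inter> e"] by simp
  also have "\<dots> \<le> (\<Sum>e\<in>C. card e - 1)"
  proof (rule sum_mono)
    fix e assume "e \<in> C"
    then have "card (U \<inter> e) < card e"
      using assms(2) by (intro psubset_card_mono) auto
    then show "card (U \<inter> e) \<le> card e - 1"
      by simp
  qed
  finally show ?thesis .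
qed

lemma stanley_reg_le: "\<forall>B\<in>set D. card (fst B) \<le> r \<Longrightarrow> stanley_reg D \<le> r"
  unfolding stanley_reg_def by auto

lemma sreg_le_stanley_reg: "stanley_decomp K n I D \<Longrightarrow> sreg K n I \<le> stanley_reg D"
  unfolding sreg_def by (rule Least_le) blast

lemma sreg_edge_ideal_le:
  assumes "finite E" "\<forall>e\<in>E. finite e" "finite A" "\<forall>e\<in>E. \<exists>v. e - {v} \<subseteq> A"
    and "\<And>U. U \<subseteq> A \<Longrightarrow> face n E U \<Longrightarrow> card U \<le> r"
  shows "sreg TYPE('k::field) n (edge_ideal n E) \<le> r"
proof -
  obtain D where D: "interval_partition n E D" "\<forall>B\<in>set D. fst B \<subseteq> A"
    by (rule interval_partition_exists[OF assms(3,4)])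
  have "card (fst B) \<le> r" if "B \<in> set D" for B
  proof (rule assms(5))
    show "face n E (fst B)"
      by (rule face_subset[OF interval_partition_block(2,1)[OF D(1) that]])
    show "fst B \<subseteq> A"
      using D(2) that by blast
  qed
  then have "stanley_reg D \<le> r"
    by (intro stanley_reg_le) blast
  moreover have "sreg TYPE('k) n (edge_ideal n E) \<le> stanley_reg D"
    by (intro sreg_le_stanley_reg stanley_decomp_of_interval_partition D(1) assms(1,2))
  ultimately show ?thesis
    by linarith
qed

lemma clutter_finite:
  assumes "clutter V E"
  shows "finite E" "\<forall>e\<in>E. finite e"
proof -
  have "finite V" "E \<subseteq> Pow V"
    using assms unfolding clutter_def by auto
  then show "finite E" "\<forall>e\<in>E. finite e"
    using finite_subset by (blast intro: finite_Pow_iff[THEN iffD2])+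
qed

lemma two_collage_edges_almost_in_Union:
  assumes "two_collage E C"
  shows "\<forall>e\<in>E. \<exists>v. e - {v} \<subseteq> \<Union>C"
proof
  fix e assume "e \<in> E"
  then obtain v f where "f \<in> C" "e - {v} \<subseteq> f"
    using assms unfolding two_collage_def by blast
  then show "\<exists>v. e - {v} \<subseteq> \<Union>C"
    by blast
qed

theorem theorem5p16:
  fixes n :: nat and V :: "nat set" and E C :: "nat set set"
  assumes "clutter V E"
    and "V \<subseteq> {..<n}"
    and "\<forall>e\<in>E. e \<noteq> {}"
    and "two_collage E C"
  shows "int (sreg TYPE('k::field) n (edge_ideal n E))
           \<le> (\<Sum>e\<in>C. (int (card e) - 1))"
proof -
  have fin: "finite E" "\<forall>e\<in>E. finite e"
    using clutter_finite[OF assms(1)] by auto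
  have C: "C \<subseteq> E" "finite C"
    using assms(4) fin(1) finite_subset unfolding two_collage_def by auto
  have "sreg TYPE('k) n (edge_ideal n E) \<le> (\<Sum>e\<in>C. card e - 1)"
  proof (rule sreg_edge_ideal_le[OF fin])
    show "finite (\<Union>C)"
      using C fin(2) by (intro finite_Union) auto
    show "\<forall>e\<in>E. \<exists>v. e - {v} \<subseteq> \<Union>C"
      using assms(4) by (rule two_collage_edges_almost_in_Union)
  next
    fix U assume "U \<subseteq> \<Union>C" "face n E U"
    then show "card U \<le> (\<Sum>e\<in>C. card e - 1)"
      using C fin(2) by (intro card_le_sum_card_minus_one) (auto simp: face_def)
  qed
  moreover have "int (\<Sum>e\<in>C. card e - 1) = (\<Sum>e\<in>C. int (card e) - 1)"
    unfolding of_nat_sum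
  proof (rule sum.cong)
    fix e assume "e \<in> C"
    then show "int (card e - 1) = int (card e) - 1"
      using C(1) fin(2) assms(3) by (simp add: Suc_le_eq card_gt_0_iff subset_iff)
  qed simp
  ultimately show ?thesis
    by linarith
qed

end
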